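(* Let $H$ be a Hermitian operator on a $d$-dimensional Hilbert space with spectral decomposition $H=\sum_{i=1}^M\lambda_i\Pi_i$, where $M\ge 2$, $\lambda_M>\cdots>\lambda_1$ are the distinct eigenvalues and $\Pi_i$ the spectral projections. Let $\Delta=\lambda_2-\lambda_1$, $d_G=\operatorname{Tr}[\Pi_1]$, and $\varepsilon\in(0,1)$. If $$\beta=\frac{1}{\Delta}\ln\!\left[\left(\frac{1-\varepsilon}{\varepsilon}\right)\left(\frac{d-d_G}{d_G}\right)\right]$$ and $\beta\ge 0$, then $$\frac{1}{2}\left\|\frac{e^{-\beta H}}{\operatorname{Tr}[e^{-\beta H}]}-\frac{\Pi_1}{\operatorname{Tr}[\Pi_1]}\right\|_1\le\varepsilon.$$
   Context: $\|A\|_1=\operatorname{Tr}[\sqrt{A^\dagger A}]$ is the trace norm. *)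

theory Defs
  imports "HOL-Analysis.Analysis"
begin

text \<open>Operators on a d-dimensional Hilbert space are complex matrices indexed by a
finite type 'n, with d = CARD('n).\<close>

definition adjoint :: "complex^'n^'n \<Rightarrow> complex^'n^'n" where
  "adjoint A = (\<chi> i j. cnj (A $ j $ i))"

definition hermitian :: "complex^'n^'n \<Rightarrow> bool" where
  "hermitian A \<longleftrightarrow> adjoint A = A"

definition psd :: "complex^'n^'n \<Rightarrow> bool" where
  "psd A \<longleftrightarrow> hermitian A \<and>
     (\<forall>v :: complex^'n. 0 \<le> Re (\<Sum>i\<in>UNIV. cnj (v $ i) * (A *v v) $ i))"

definition mat_sqrt :: "complex^'n^'n \<Rightarrow> complex^'n^'n" where
  "mat_sqrt A = (THE B. psd B \<and> B ** B = A)"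

text \<open>Trace norm  ||A||_1 = Tr sqrt(A^dagger A)  (the trace is real; we take its real part).\<close>
definition trace_norm :: "complex^'n^'n \<Rightarrow> real" where
  "trace_norm A = Re (trace (mat_sqrt (adjoint A ** A)))"

primrec mat_pow :: "complex^'n^'n \<Rightarrow> nat \<Rightarrow> complex^'n^'n" where
  "mat_pow A 0 = mat 1"
| "mat_pow A (Suc k) = A ** mat_pow A k"

definition mat_exp :: "complex^'n^'n \<Rightarrow> complex^'n^'n" where
  "mat_exp A = (\<chi> i j. \<Sum>k. (mat_pow A k $ i $ j) / of_nat (fact k))"

definition mat_div :: "complex^'n^'n \<Rightarrow> complex \<Rightarrow> complex^'n^'n" where
  "mat_div A c = (\<chi> i j. A $ i $ j / c)"

end

theory Submission
  imports Defs
begin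

text \<open>Every matrix in the statement is a function of H, i.e. a spectral sum
sum_i c_i Pi_i, and on spectral sums products, the exponential, the positive square root
and the trace act coefficientwise. With w_i = exp (- beta lambda_i) and d_i = Tr Pi_i, the
difference of the two normalised states therefore has coefficients c_1 < 0 <= c_i (i >= 2),
so its trace norm sum_i |c_i| d_i equals 2 X / (w_1 d_1 + X), where X = sum_{i >= 2} w_i d_i.
Since beta >= 0, X <= w_2 (d - d_G), and beta is chosen exactly so that
w_2 (d - d_G) = w_1 d_G epsilon / (1 - epsilon), which is equivalent to
X / (w_1 d_1 + X) <= epsilon.\<close>

lemma matrix_add_rdistrib: "((B::'a::semiring_1^'n^'m) + C) ** A = B ** A + C ** A"
  by (vector matrix_matrix_mult_def sum.distrib[symmetric] field_simps)

lemma sum_matrix_matrix_mult: "sum f S ** (B::'a::semiring_1^'n^'m) = (\<Sum>i\<in>S. f i ** B)"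
  by (induction S rule: infinite_finite_induct) (auto simp: matrix_add_rdistrib)

lemma matrix_matrix_mult_sum: "(B::'a::semiring_1^'n^'m) ** sum f S = (\<Sum>i\<in>S. B ** f i)"
  by (induction S rule: infinite_finite_induct) (auto simp: matrix_add_ldistrib)

lemma sum_matrix_vector_mult: "sum f S *v (x::'a::semiring_1^'n) = (\<Sum>i\<in>S. f i *v x)"
  by (induction S rule: infinite_finite_induct) (auto simp: matrix_vector_mult_add_rdistrib)

lemma matrix_vector_mult_scaleR_left: "(r *\<^sub>R (A::'a::real_algebra_1^'n^'m)) *v x = r *\<^sub>R (A *v x)"
  by (simp add: vec_eq_iff matrix_vector_mult_def scaleR_sum_right)

lemma matrix_vector_mult_scaleR_right: "(A::'a::real_algebra_1^'n^'m) *v (r *\<^sub>R x) = r *\<^sub>R (A *v x)"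
  by (simp add: vec_eq_iff matrix_vector_mult_def scaleR_sum_right algebra_simps)

lemma adjoint_scaleR: "adjoint (r *\<^sub>R A) = r *\<^sub>R adjoint A"
  by (simp add: adjoint_def vec_eq_iff)

lemma adjoint_sum: "adjoint (sum f S) = (\<Sum>i\<in>S. adjoint (f i))"
  by (simp add: adjoint_def vec_eq_iff sum_component)

definition cinner :: "complex^'n \<Rightarrow> complex^'n \<Rightarrow> complex" where
  "cinner x y = (\<Sum>k\<in>UNIV. cnj (x $ k) * y $ k)"

lemma psd_iff_cinner: "psd A \<longleftrightarrow> hermitian A \<and> (\<forall>v. 0 \<le> Re (cinner v (A *v v)))"
  by (simp add: psd_def cinner_def)

lemma cinner_matrix_vector_mult: "cinner x (A *v y) = cinner (adjoint A *v x) y"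
proof -
  have "cinner x (A *v y) = (\<Sum>k\<in>UNIV. \<Sum>j\<in>UNIV. cnj (x $ k) * A $ k $ j * y $ j)"
    by (simp add: cinner_def matrix_vector_mult_def sum_distrib_left mult.assoc)
  also have "\<dots> = (\<Sum>j\<in>UNIV. \<Sum>k\<in>UNIV. cnj (x $ k) * A $ k $ j * y $ j)"
    by (rule sum.swap)
  also have "\<dots> = cinner (adjoint A *v x) y"
    by (simp add: cinner_def adjoint_def matrix_vector_mult_def sum_distrib_left sum_distrib_right mult_ac)
  finally show ?thesis .
qed

lemma cnj_mult_self: "cnj z * z = of_real ((cmod z)\<^sup>2)"
  by (metis complex_mult_cnj cmod_power2 mult.commute)

lemma cinner_self: "cinner x x = of_real (\<Sum>k\<in>UNIV. (cmod (x $ k))\<^sup>2)"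
  by (simp add: cinner_def cnj_mult_self)

lemma Re_cinner_self_nonneg: "0 \<le> Re (cinner x x)"
  by (simp add: cinner_self sum_nonneg)

lemma Re_cinner_self_eq_0_iff: "Re (cinner x x) = 0 \<longleftrightarrow> x = 0"
  by (simp add: cinner_self sum_nonneg_eq_0_iff vec_eq_iff)

lemma cinner_scaleR_right: "cinner x (r *\<^sub>R y) = of_real r * cinner x y"
  unfolding cinner_def vector_scaleR_component by (simp add: scaleR_conv_of_real sum_distrib_left mult_ac)

lemma cinner_sum_right: "cinner x (sum f S) = (\<Sum>i\<in>S. cinner x (f i))"
  unfolding cinner_def sum_component by (simp add: sum_distrib_left sum.swap[of _ S])

lemma psd_eigenvector_of_square:
  assumes "psd B" "0 \<le> s" "(B ** B) *v x = s\<^sup>2 *\<^sub>R x"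
  shows "B *v x = s *\<^sub>R x"
proof -
  define u where "u = B *v x - s *\<^sub>R x"
  have herm: "adjoint B = B"
    using assms(1) by (simp add: psd_def hermitian_def)
  have Bu: "B *v u = (- s) *\<^sub>R u"
    using assms(3)
    by (simp add: u_def matrix_vector_mult_diff_distrib matrix_vector_mul_assoc
        matrix_vector_mult_scaleR_right algebra_simps power2_eq_square)
  have "Re (cinner u u) = 0"
  proof (cases "s = 0")
    case True
    then have "cinner u u = cinner (adjoint B *v x) u"
      by (simp add: u_def herm)
    also have "\<dots> = cinner x (B *v u)"
      by (rule cinner_matrix_vector_mult[symmetric])
    also have "\<dots> = 0"
      using Bu True by (simp add: cinner_def)
    finally show ?thesis by simp
  next
    case False
    have "0 \<le> Re (cinner u (B *v u))"
      using assms(1) by (simp add: psd_iff_cinner)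
    also have "\<dots> = - s * Re (cinner u u)"
      by (simp only: Bu cinner_scaleR_right) simp
    finally show ?thesis
      using False assms(2) Re_cinner_self_nonneg[of u] by (simp add: mult_le_0_iff)
  qed
  then show ?thesis
    by (simp add: Re_cinner_self_eq_0_iff u_def)
qed

lemma trace_orthogonal_projection:
  assumes "P ** P = P" "adjoint P = P"
  shows "trace P = of_real (\<Sum>a\<in>UNIV. \<Sum>b\<in>UNIV. (cmod (P $ b $ a))\<^sup>2)"
proof -
  have "P $ a $ a = (\<Sum>b\<in>UNIV. cnj (P $ b $ a) * P $ b $ a)" for a
    using arg_cong[OF assms(1), of "\<lambda>A. A $ a $ a"] arg_cong[OF assms(2), of "\<lambda>A. A $ a"]
    by (simp add: matrix_matrix_mult_def adjoint_def vec_eq_iff)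
  then show ?thesis
    by (simp add: trace_def cnj_mult_self)
qed

lemma trace_orthogonal_projection_pos:
  assumes "P ** P = P" "adjoint P = P" "P \<noteq> 0"
  shows "0 < Re (trace P)"
proof -
  obtain a b where "P $ b $ a \<noteq> 0"
    using assms(3) by (auto simp: vec_eq_iff)
  then have "0 < (cmod (P $ b $ a))\<^sup>2"
    by simp
  also have "\<dots> \<le> (\<Sum>b\<in>UNIV. (cmod (P $ b $ a))\<^sup>2)"
    by (rule member_le_sum) auto
  also have "\<dots> \<le> (\<Sum>a\<in>UNIV. \<Sum>b\<in>UNIV. (cmod (P $ b $ a))\<^sup>2)"
    by (rule member_le_sum[where f = "\<lambda>a. \<Sum>b\<in>UNIV. (cmod (P $ b $ a))\<^sup>2"]) (auto intro: sum_nonneg)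
  finally show ?thesis
    using trace_orthogonal_projection[OF assms(1,2)] by simp
qed

definition spectral_sum :: "('i \<Rightarrow> complex^'n^'n) \<Rightarrow> 'i set \<Rightarrow> ('i \<Rightarrow> real) \<Rightarrow> complex^'n^'n" where
  "spectral_sum P I f = (\<Sum>i\<in>I. f i *\<^sub>R P i)"

lemma spectral_sum_component:
  "spectral_sum P I f $ a $ b = (\<Sum>i\<in>I. of_real (f i) * P i $ a $ b)"
  unfolding spectral_sum_def sum_component vector_scaleR_component by (simp add: scaleR_conv_of_real)

locale resolution_of_identity =
  fixes P :: "'i \<Rightarrow> complex^('n::finite)^'n" and I :: "'i set"
  assumes finite_index: "finite I"
    and idempotent: "\<And>i. i \<in> I \<Longrightarrow> P i ** P i = P i"
    and self_adjoint: "\<And>i. i \<in> I \<Longrightarrow> adjoint (P i) = P i"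
    and orthogonal: "\<And>i j. i \<in> I \<Longrightarrow> j \<in> I \<Longrightarrow> i \<noteq> j \<Longrightarrow> P i ** P j = 0"
    and sum_eq_id: "sum P I = mat 1"
begin

lemma spectral_sum_mult_projection:
  assumes "i \<in> I"
  shows "spectral_sum P I f ** P i = f i *\<^sub>R P i"
proof -
  have "spectral_sum P I f ** P i = (\<Sum>j\<in>I. if j = i then f i *\<^sub>R P i else 0)"
    unfolding spectral_sum_def sum_matrix_matrix_mult
    by (rule sum.cong) (auto simp: assms idempotent orthogonal simp flip: scalar_matrix_assoc)
  also have "\<dots> = f i *\<^sub>R P i"
    using finite_index assms by simp
  finally show ?thesis .
qed

lemma spectral_sum_mult:
  "spectral_sum P I f ** spectral_sum P I g = spectral_sum P I (\<lambda>i. f i * g i)"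
proof -
  have "spectral_sum P I f ** spectral_sum P I g = (\<Sum>j\<in>I. g j *\<^sub>R (spectral_sum P I f ** P j))"
    by (simp add: spectral_sum_def[of P I g] matrix_matrix_mult_sum matrix_scalar_ac
        flip: scalar_matrix_assoc)
  also have "\<dots> = (\<Sum>j\<in>I. (f j * g j) *\<^sub>R P j)"
    by (intro sum.cong) (simp_all add: spectral_sum_mult_projection mult.commute)
  finally show ?thesis
    by (simp add: spectral_sum_def)
qed

lemma spectral_sum_one: "spectral_sum P I (\<lambda>_. 1) = mat 1"
  by (simp add: spectral_sum_def sum_eq_id)

lemma mat_pow_spectral_sum: "mat_pow (spectral_sum P I f) k = spectral_sum P I (\<lambda>i. f i ^ k)"
  by (induction k) (simp_all add: spectral_sum_one spectral_sum_mult)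

lemma mat_exp_spectral_sum: "mat_exp (spectral_sum P I f) = spectral_sum P I (\<lambda>i. exp (f i))"
proof -
  have "(\<lambda>k. mat_pow (spectral_sum P I f) k $ a $ b / of_nat (fact k))
          sums (spectral_sum P I (\<lambda>i. exp (f i)) $ a $ b)" for a b
  proof -
    have "(\<lambda>k. of_real (f i ^ k) * P i $ a $ b / of_nat (fact k))
            sums (of_real (exp (f i)) * P i $ a $ b)" for i
    proof -
      have "(\<lambda>k. complex_of_real (f i ^ k /\<^sub>R fact k)) sums of_real (exp (f i))"
        using exp_converges sums_of_real by blast
      then have "(\<lambda>k. complex_of_real (f i ^ k /\<^sub>R fact k) * P i $ a $ b)
                   sums (of_real (exp (f i)) * P i $ a $ b)"
        by (rule sums_mult2)
      then show ?thesis
        by (simp add: field_simps)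
    qed
    then show ?thesis
      unfolding mat_pow_spectral_sum spectral_sum_component sum_divide_distrib
      by (intro sums_sum)
  qed
  then show ?thesis
    unfolding mat_exp_def by (simp add: vec_eq_iff sums_iff)
qed

lemma adjoint_spectral_sum: "adjoint (spectral_sum P I f) = spectral_sum P I f"
  by (simp add: spectral_sum_def adjoint_sum adjoint_scaleR self_adjoint)

lemma trace_projection:
  assumes "i \<in> I"
  shows "of_real (Re (trace (P i))) = trace (P i)" and "0 \<le> Re (trace (P i))"
  using trace_orthogonal_projection[OF idempotent[OF assms] self_adjoint[OF assms]]
  by (simp_all add: sum_nonneg)

lemma trace_spectral_sum:
  "trace (spectral_sum P I f) = of_real (\<Sum>i\<in>I. f i * Re (trace (P i)))"
proof -
  have "trace (spectral_sum P I f) = (\<Sum>a\<in>UNIV. \<Sum>i\<in>I. of_real (f i) * P i $ a $ a)"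
    by (simp add: trace_def spectral_sum_component)
  also have "\<dots> = (\<Sum>i\<in>I. of_real (f i) * trace (P i))"
    by (simp add: trace_def sum_distrib_left) (rule sum.swap)
  also have "\<dots> = of_real (\<Sum>i\<in>I. f i * Re (trace (P i)))"
    by (simp add: trace_projection(1))
  finally show ?thesis .
qed

lemma sum_trace_projections: "(\<Sum>i\<in>I. Re (trace (P i))) = real CARD('n)"
proof -
  have "complex_of_real (\<Sum>i\<in>I. Re (trace (P i))) = of_real (real CARD('n))"
    using trace_spectral_sum[of "\<lambda>_. 1"] by (simp add: spectral_sum_one trace_I)
  then show ?thesis
    by (simp only: of_real_eq_iff)
qed

lemma mat_div_spectral_sum:
  "mat_div (spectral_sum P I f) (of_real z) = spectral_sum P I (\<lambda>i. f i / z)"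
  by (simp add: mat_div_def vec_eq_iff spectral_sum_component sum_divide_distrib)

lemma spectral_sum_diff:
  "spectral_sum P I f - spectral_sum P I g = spectral_sum P I (\<lambda>i. f i - g i)"
  by (simp add: spectral_sum_def scaleR_diff_left sum_subtractf)

lemma projection_eq_spectral_sum:
  assumes "i \<in> I"
  shows "P i = spectral_sum P I (\<lambda>j. if j = i then 1 else 0)"
  using finite_index assms by (simp add: spectral_sum_def if_distrib[of "\<lambda>r. r *\<^sub>R _"] cong: if_cong)

lemma psd_spectral_sum:
  assumes "\<And>i. i \<in> I \<Longrightarrow> 0 \<le> f i"
  shows "psd (spectral_sum P I f)"
proof -
  have proj_cinner: "cinner v (P i *v v) = cinner (P i *v v) (P i *v v)" if "i \<in> I" for i v
  proof -
    have "cinner v (P i *v v) = cinner v (P i *v (P i *v v))"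
      by (simp add: matrix_vector_mul_assoc idempotent that)
    also have "\<dots> = cinner (P i *v v) (P i *v v)"
      by (simp add: cinner_matrix_vector_mult self_adjoint that)
    finally show ?thesis .
  qed
  have "Re (cinner v (spectral_sum P I f *v v))
          = (\<Sum>i\<in>I. f i * Re (cinner (P i *v v) (P i *v v)))" for v
    by (simp add: spectral_sum_def sum_matrix_vector_mult cinner_sum_right cinner_scaleR_right
        matrix_vector_mult_scaleR_left proj_cinner)
  then show ?thesis
    using assms
    by (simp add: psd_iff_cinner hermitian_def adjoint_spectral_sum sum_nonneg Re_cinner_self_nonneg)
qed

lemma psd_eq_spectral_sum_if_square:
  assumes "psd B" "\<And>i. i \<in> I \<Longrightarrow> 0 \<le> s i" "B ** B = spectral_sum P I (\<lambda>i. (s i)\<^sup>2)"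
  shows "B = spectral_sum P I s"
proof -
  have "B ** P i = s i *\<^sub>R P i" if "i \<in> I" for i
    unfolding matrix_eq
  proof
    fix w
    have "(B ** B) *v (P i *v w) = (s i)\<^sup>2 *\<^sub>R (P i *v w)"
      by (simp add: assms(3) matrix_vector_mul_assoc spectral_sum_mult_projection that
          matrix_vector_mult_scaleR_left)
    then have "B *v (P i *v w) = s i *\<^sub>R (P i *v w)"
      by (rule psd_eigenvector_of_square[OF assms(1) assms(2)[OF that]])
    then show "(B ** P i) *v w = (s i *\<^sub>R P i) *v w"
      by (simp add: matrix_vector_mul_assoc matrix_vector_mult_scaleR_left)
  qed
  then have "B ** sum P I = spectral_sum P I s"
    by (simp add: matrix_matrix_mult_sum spectral_sum_def)
  then show ?thesis
    by (simp add: sum_eq_id)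
qed

lemma mat_sqrt_spectral_sum:
  assumes "\<And>i. i \<in> I \<Longrightarrow> 0 \<le> s i"
  shows "mat_sqrt (spectral_sum P I (\<lambda>i. (s i)\<^sup>2)) = spectral_sum P I s"
  unfolding mat_sqrt_def
proof (rule the_equality)
  show "psd (spectral_sum P I s)
          \<and> spectral_sum P I s ** spectral_sum P I s = spectral_sum P I (\<lambda>i. (s i)\<^sup>2)"
    using assms by (simp add: psd_spectral_sum spectral_sum_mult power2_eq_square)
qed (use psd_eq_spectral_sum_if_square assms in blast)

lemma trace_norm_spectral_sum:
  "trace_norm (spectral_sum P I c) = (\<Sum>i\<in>I. \<bar>c i\<bar> * Re (trace (P i)))"
proof -
  have "adjoint (spectral_sum P I c) ** spectral_sum P I c = spectral_sum P I (\<lambda>i. \<bar>c i\<bar>\<^sup>2)"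
    by (simp add: adjoint_spectral_sum spectral_sum_mult power2_eq_square)
  then have "mat_sqrt (adjoint (spectral_sum P I c) ** spectral_sum P I c) = spectral_sum P I (\<lambda>i. \<bar>c i\<bar>)"
    using mat_sqrt_spectral_sum[of "\<lambda>i. \<bar>c i\<bar>"] by simp
  then show ?thesis
    by (simp add: trace_norm_def trace_spectral_sum)
qed

lemma trace_norm_normalized_diff_projection:
  assumes g: "g \<in> I" "P g \<noteq> 0" and w: "\<And>i. i \<in> I \<Longrightarrow> 0 \<le> w i" "0 < w g"
  shows "trace_norm (mat_div (spectral_sum P I w) (trace (spectral_sum P I w))
                      - mat_div (P g) (trace (P g)))
         = 2 * (\<Sum>i\<in>I - {g}. w i * Re (trace (P i))) / (\<Sum>i\<in>I. w i * Re (trace (P i)))"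
proof -
  define d where "d i = Re (trace (P i))" for i
  define X where "X = (\<Sum>i\<in>I - {g}. w i * d i)"
  define Z where "Z = (\<Sum>i\<in>I. w i * d i)"
  have dg: "0 < d g"
    unfolding d_def by (rule trace_orthogonal_projection_pos) (simp_all add: g idempotent self_adjoint)
  have X: "0 \<le> X"
    unfolding X_def d_def using w(1) trace_projection(2) by (auto intro!: sum_nonneg)
  have Z: "Z = w g * d g + X"
    unfolding Z_def X_def using finite_index g(1) by (rule sum.remove)
  have Z_pos: "0 < Z"
    using Z X dg w(2) by (simp add: add_pos_nonneg)
  define c where "c i = w i / Z - (if i = g then 1 else 0) / d g" for i
  have "trace (spectral_sum P I w) = of_real Z"
    by (simp add: trace_spectral_sum Z_def d_def)
  moreover have "trace (P g) = of_real (d g)"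
    using trace_projection(1)[OF g(1)] by (simp add: d_def)
  ultimately have diff: "mat_div (spectral_sum P I w) (trace (spectral_sum P I w))
                           - mat_div (P g) (trace (P g)) = spectral_sum P I c"
    by (simp only:) (subst projection_eq_spectral_sum[OF g(1)],
        simp add: mat_div_spectral_sum spectral_sum_diff c_def[abs_def])
  have "trace_norm (spectral_sum P I c) = \<bar>c g\<bar> * d g + (\<Sum>i\<in>I - {g}. \<bar>c i\<bar> * d i)"
    by (simp add: trace_norm_spectral_sum d_def sum.remove[OF finite_index g(1)])
  also have "\<bar>c g\<bar> * d g = X / Z"
  proof -
    have "c g * d g = w g * d g / Z - 1"
      using dg by (simp add: c_def field_simps)
    also have "\<dots> = - (X / Z)"
      using Z Z_pos by (simp add: field_simps)
    finally have "c g * d g = - (X / Z)" .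
    then have "\<bar>c g\<bar> * d g = \<bar>X / Z\<bar>"
      using dg by (metis abs_minus_cancel abs_mult abs_of_pos)
    then show ?thesis
      using X Z_pos by simp
  qed
  also have "(\<Sum>i\<in>I - {g}. \<bar>c i\<bar> * d i) = X / Z"
    unfolding X_def sum_divide_distrib by (intro sum.cong refl) (use w Z_pos in \<open>auto simp: c_def\<close>)
  finally show ?thesis
    by (simp add: diff X_def Z_def d_def)
qed

end

lemma sum_boltzmann_weights_le:
  fixes lam d :: "'i \<Rightarrow> real"
  assumes "0 \<le> \<beta>" "\<And>i. i \<in> J \<Longrightarrow> 0 \<le> d i" "\<And>i. i \<in> J \<Longrightarrow> \<mu> \<le> lam i"
  shows "(\<Sum>i\<in>J. exp (- \<beta> * lam i) * d i) \<le> exp (- \<beta> * \<mu>) * sum d J"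
  unfolding sum_distrib_left
  by (intro sum_mono mult_right_mono) (use assms in \<open>auto intro: mult_left_mono\<close>)

lemma boltzmann_excited_fraction_le:
  fixes d lam :: "'i \<Rightarrow> real"
  assumes d: "0 < d0" "0 < sum d J" "\<And>i. i \<in> J \<Longrightarrow> 0 \<le> d i"
    and levels: "lam0 < lam1" "\<And>i. i \<in> J \<Longrightarrow> lam1 \<le> lam i"
    and eps: "0 < \<epsilon>" "\<epsilon> < 1"
    and beta: "\<beta> = 1 / (lam1 - lam0) * ln ((1 - \<epsilon>) / \<epsilon> * (sum d J / d0))" "0 \<le> \<beta>"
  shows "(\<Sum>i\<in>J. exp (- \<beta> * lam i) * d i)
           / (exp (- \<beta> * lam0) * d0 + (\<Sum>i\<in>J. exp (- \<beta> * lam i) * d i)) \<le> \<epsilon>"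
proof -
  define X where "X = (\<Sum>i\<in>J. exp (- \<beta> * lam i) * d i)"
  have "0 < (1 - \<epsilon>) / \<epsilon> * (sum d J / d0)"
    using eps d by (intro mult_pos_pos divide_pos_pos) auto
  moreover have "\<beta> * (lam1 - lam0) = ln ((1 - \<epsilon>) / \<epsilon> * (sum d J / d0))"
    using beta(1) levels(1) by simp
  ultimately have "exp (\<beta> * (lam1 - lam0)) = (1 - \<epsilon>) / \<epsilon> * (sum d J / d0)"
    by simp
  then have "sum d J * (1 - \<epsilon>) = \<epsilon> * (exp (\<beta> * (lam1 - lam0)) * d0)"
    using eps d(1) by (simp add: field_simps)
  then have "exp (- \<beta> * lam1) * sum d J * (1 - \<epsilon>)
               = \<epsilon> * (exp (- \<beta> * lam1) * exp (\<beta> * (lam1 - lam0)) * d0)"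
    by (simp add: mult_ac)
  also have "\<dots> = \<epsilon> * (exp (- \<beta> * lam0) * d0)"
    by (simp add: algebra_simps flip: exp_add)
  finally have tail: "exp (- \<beta> * lam1) * sum d J * (1 - \<epsilon>) = \<epsilon> * (exp (- \<beta> * lam0) * d0)" .
  have "X * (1 - \<epsilon>) \<le> exp (- \<beta> * lam1) * sum d J * (1 - \<epsilon>)"
    unfolding X_def using beta(2) d(3) levels(2) eps
    by (intro mult_right_mono sum_boltzmann_weights_le) auto
  then have "X \<le> \<epsilon> * (exp (- \<beta> * lam0) * d0 + X)"
    unfolding tail by (simp add: algebra_simps)
  moreover have "0 < exp (- \<beta> * lam0) * d0 + X"
    unfolding X_def using d by (intro add_pos_nonneg sum_nonneg) auto
  ultimately show ?thesis
    unfolding X_def[symmetric] by (simp add: pos_divide_le_eq mult.commute)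
qed

theorem corollary1:
  fixes H :: "complex^'n^'n"
    and M :: nat
    and lam :: "nat \<Rightarrow> real"
    and P :: "nat \<Rightarrow> complex^'n^'n"
    and \<epsilon> \<beta> :: real
  assumes herm: "hermitian H"
    and M2: "M \<ge> 2"
    and lam_mono: "\<And>i j. i \<in> {1..M} \<Longrightarrow> j \<in> {1..M} \<Longrightarrow> i < j \<Longrightarrow> lam i < lam j"
    and P_proj: "\<And>i. i \<in> {1..M} \<Longrightarrow> P i ** P i = P i \<and> adjoint (P i) = P i"
    and P_nonzero: "\<And>i. i \<in> {1..M} \<Longrightarrow> P i \<noteq> 0"
    and P_orth: "\<And>i j. i \<in> {1..M} \<Longrightarrow> j \<in> {1..M} \<Longrightarrow> i \<noteq> j \<Longrightarrow> P i ** P j = 0"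
    and P_complete: "(\<Sum>i=1..M. P i) = mat 1"
    and H_decomp: "H = (\<Sum>i=1..M. lam i *\<^sub>R P i)"
    and eps: "0 < \<epsilon>" "\<epsilon> < 1"
    and beta_def: "\<beta> = (1 / (lam 2 - lam 1)) *
        ln (((1 - \<epsilon>) / \<epsilon>) * ((real CARD('n) - Re (trace (P 1))) / Re (trace (P 1))))"
    and beta_nonneg: "\<beta> \<ge> 0"
  shows "(1/2) * trace_norm (mat_div (mat_exp ((- \<beta>) *\<^sub>R H)) (trace (mat_exp ((- \<beta>) *\<^sub>R H)))
                              - mat_div (P 1) (trace (P 1))) \<le> \<epsilon>"
proof -
  interpret resolution_of_identity P "{1..M}"
    using P_proj P_orth P_complete by unfold_locales auto
  define d where "d i = Re (trace (P i))" for i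
  define w where "w i = exp (- \<beta> * lam i)" for i
  have excited: "{1..M} - {1} = {2..M}"
    by auto
  have split: "sum f {1..M} = f 1 + sum f {2..M}" for f :: "nat \<Rightarrow> real"
    using sum.remove[of "{1..M}" 1 f] M2 unfolding excited by simp
  have d_pos: "0 < d i" if "i \<in> {1..M}" for i
    unfolding d_def using P_proj P_nonzero that by (intro trace_orthogonal_projection_pos) auto
  have "mat_exp ((- \<beta>) *\<^sub>R H) = spectral_sum P {1..M} w"
    using mat_exp_spectral_sum[of "\<lambda>i. - \<beta> * lam i"]
    by (simp add: H_decomp spectral_sum_def scaleR_sum_right w_def)
  then have "(1/2) * trace_norm (mat_div (mat_exp ((- \<beta>) *\<^sub>R H)) (trace (mat_exp ((- \<beta>) *\<^sub>R H)))
                              - mat_div (P 1) (trace (P 1)))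
      = (\<Sum>i=2..M. w i * d i) / (w 1 * d 1 + (\<Sum>i=2..M. w i * d i))"
    using trace_norm_normalized_diff_projection[of 1 w] M2 P_nonzero
    unfolding excited split by (simp add: d_def w_def)
  also have "\<dots> \<le> \<epsilon>"
    unfolding w_def
  proof (rule boltzmann_excited_fraction_le)
    show "\<beta> = 1 / (lam 2 - lam 1) * ln ((1 - \<epsilon>) / \<epsilon> * (sum d {2..M} / d 1))"
      using beta_def sum_trace_projections split[of d] by (simp add: d_def)
  qed (use M2 d_pos lam_mono eps beta_nonneg in \<open>auto intro!: sum_pos simp: le_less\<close>)
  finally show ?thesis .
qed

end
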